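(* In the process described in the context, for each item $j$, $\Pr[\text{a medium or tiny blocking event occurs for } j\mid j\in\mathcal R_0]\le O(\alpha^2k^{-1}\log^2(k/\alpha))=o(1)$.
   Context: Consider a $k$-CS-PIP instance: matrix $\vec A\in[0,1]^{m\times n}$ (entries $a_{ij}$), each column having at most $k$ nonzero entries, and $\vec x\in[0,1]^n$ with $\vec A\vec x\le\vec 1$ (an optimal solution of the LP that additionally imposes $\sum_{j:a_{ij}>1/2}x_j\le1$ for every row $i$). Let $\alpha=k^{0.4}$, $\ell=80\log(k/\alpha)$, and for row $i$: $\mathrm{med}(i)=\{j:1/\ell\le a_{ij}\le 1/2\}$, $\mathrm{tiny}(i)=\{j:0<a_{ij}<1/\ell\}$. Let $\mathcal R_0$ contain each item $j$ independently with probability $\alpha x_j/k$. A medium blocking event occurs for $j$ if some row $i$ with $j\in\mathrm{med}(i)$ has $|\mathrm{med}(i)\cap\mathcal R_0|\ge 3$; a tiny blocking event occurs for $j$ if some row $i$ with $j\in\mathrm{tiny}(i)$ has $\sum_{j'\ne j,\ j'\in(\mathrm{med}(i)\cup\mathrm{tiny}(i))\cap\mathcal R_0}a_{ij'}>1-a_{ij}$ or $|\mathrm{med}(i)\cap\mathcal R_0|\ge2$. Asymptotics are as $k\to\infty$. *)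

theory Defs
  imports "HOL-Probability.Probability"
begin

definition kcspip_instance ::
  "nat \<Rightarrow> nat \<Rightarrow> nat \<Rightarrow> (nat \<Rightarrow> nat \<Rightarrow> real) \<Rightarrow> (nat \<Rightarrow> real) \<Rightarrow> bool" where
  "kcspip_instance k m n A x \<longleftrightarrow>
     (\<forall>i<m. \<forall>j<n. 0 \<le> A i j \<and> A i j \<le> 1) \<and>
     (\<forall>j<n. card {i. i < m \<and> A i j \<noteq> 0} \<le> k) \<and>
     (\<forall>j<n. 0 \<le> x j \<and> x j \<le> 1) \<and>
     (\<forall>i<m. (\<Sum>j<n. A i j * x j) \<le> 1) \<and>
     (\<forall>i<m. (\<Sum>j\<in>{j. j < n \<and> A i j > 1/2}. x j) \<le> 1)"

definition alpha :: "nat \<Rightarrow> real" where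
  "alpha k = real k powr 0.4"

definition ell :: "nat \<Rightarrow> real" where
  "ell k = 80 * ln (real k / alpha k)"

definition med :: "nat \<Rightarrow> (nat \<Rightarrow> nat \<Rightarrow> real) \<Rightarrow> nat \<Rightarrow> nat \<Rightarrow> nat set" where
  "med k A n i = {j. j < n \<and> 1 / ell k \<le> A i j \<and> A i j \<le> 1/2}"

definition tiny :: "nat \<Rightarrow> (nat \<Rightarrow> nat \<Rightarrow> real) \<Rightarrow> nat \<Rightarrow> nat \<Rightarrow> nat set" where
  "tiny k A n i = {j. j < n \<and> 0 < A i j \<and> A i j < 1 / ell k}"

definition R0_pmf :: "nat \<Rightarrow> nat \<Rightarrow> (nat \<Rightarrow> real) \<Rightarrow> nat set pmf" where
  "R0_pmf k n x = map_pmf (\<lambda>f. {j. f j})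
     (Pi_pmf {..<n} False (\<lambda>j. bernoulli_pmf (alpha k * x j / real k)))"

definition medium_block ::
  "nat \<Rightarrow> nat \<Rightarrow> nat \<Rightarrow> (nat \<Rightarrow> nat \<Rightarrow> real) \<Rightarrow> nat set \<Rightarrow> nat \<Rightarrow> bool" where
  "medium_block k m n A R j \<longleftrightarrow>
     (\<exists>i<m. j \<in> med k A n i \<and> card (med k A n i \<inter> R) \<ge> 3)"

definition tiny_block ::
  "nat \<Rightarrow> nat \<Rightarrow> nat \<Rightarrow> (nat \<Rightarrow> nat \<Rightarrow> real) \<Rightarrow> nat set \<Rightarrow> nat \<Rightarrow> bool" where
  "tiny_block k m n A R j \<longleftrightarrow>
     (\<exists>i<m. j \<in> tiny k A n i \<and>
        ((\<Sum>j'\<in>((med k A n i \<union> tiny k A n i) \<inter> R) - {j}. A i j') > 1 - A i j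
         \<or> card (med k A n i \<inter> R) \<ge> 2))"

text \<open>Conditional probability Pr[E | F] = Pr[E and F] / Pr[F] (0 if Pr[F] = 0).\<close>
definition cond_prob :: "'a pmf \<Rightarrow> ('a \<Rightarrow> bool) \<Rightarrow> ('a \<Rightarrow> bool) \<Rightarrow> real" where
  "cond_prob p E F = measure_pmf.prob p {s. E s \<and> F s} / measure_pmf.prob p {s. F s}"

end

(* Every row i containing j that blocks j forces a nonnegative
   test function to be at least 1: the number of ordered pairs of further medium items of row i
   in R0, plus exp(-ell/6) times the exponential moment exp(ell/2 * (tiny mass of row i in R0)).
   Items t enter R0 independently with probability p_t = q x_t, q = alpha/k, and each row has
   LP-mass at most 1; since medium entries are at least 1/ell, the first term has expectation at
   most p_j (q ell)^2, and since tiny entries are below 1/ell the second is at most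
   p_j exp(-ell/6) e <= 3 p_j q^2. Markov's inequality summed over the at most k rows containing j,
   divided by Pr[j in R0] = p_j, gives O(k q^2 ell^2) = O(alpha^2/k * log^2(k/alpha)). *)

theory Submission
  imports Defs "HOL-Real_Asymp.Real_Asymp"
begin

definition random_subset_pmf :: "nat \<Rightarrow> (nat \<Rightarrow> real) \<Rightarrow> nat set pmf" where
  "random_subset_pmf n p = map_pmf (\<lambda>f. {y. f y}) (Pi_pmf {..<n} False (\<lambda>y. bernoulli_pmf (p y)))"

lemma R0_pmf_eq_random_subset_pmf:
  "R0_pmf k n x = random_subset_pmf n (\<lambda>y. alpha k * x y / real k)"
  unfolding R0_pmf_def random_subset_pmf_def ..

lemma finite_set_random_subset_pmf: "finite (set_pmf (random_subset_pmf n p))"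
proof -
  have "finite (set_pmf (Pi_pmf {..<n} False (\<lambda>y. bernoulli_pmf (p y))))"
    by (rule finite_subset[OF set_Pi_pmf_subset']) auto
  then show ?thesis
    unfolding random_subset_pmf_def by simp
qed

lemma integrable_random_subset_pmf [simp]:
  "integrable (measure_pmf (random_subset_pmf n p)) (g :: nat set \<Rightarrow> real)"
  by (rule integrable_measure_pmf_finite[OF finite_set_random_subset_pmf])

lemma expectation_random_subset_pmf_prod:
  assumes D: "D \<subseteq> {..<n}" and p: "\<And>y. y \<in> D \<Longrightarrow> 0 \<le> p y \<and> p y \<le> 1"
    and h: "\<And>y b. 0 \<le> h y b"
  shows "measure_pmf.expectation (random_subset_pmf n p) (\<lambda>R. \<Prod>y\<in>D. h y (y \<in> R))
       = (\<Prod>y\<in>D. h y True * p y + h y False * (1 - p y))"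
proof -
  let ?P = "\<lambda>A. Pi_pmf A False (\<lambda>y. bernoulli_pmf (p y))"
  define g where "g f = (\<Prod>y\<in>D. h y (f y))" for f :: "nat \<Rightarrow> bool"
  have fin: "finite D" using D finite_subset by blast
  have "measure_pmf.expectation (random_subset_pmf n p) (\<lambda>R. \<Prod>y\<in>D. h y (y \<in> R))
      = measure_pmf.expectation (?P {..<n}) g"
    unfolding random_subset_pmf_def g_def[abs_def] by simp
  also have "\<dots> = measure_pmf.expectation (?P D) g"
    using Pi_pmf_subset[OF finite_lessThan D, of False] by (simp add: g_def[abs_def] cong: prod.cong)
  also have "\<dots> = (\<Prod>y\<in>D. measure_pmf.expectation (bernoulli_pmf (p y)) (h y))"
    unfolding g_def using fin h
    by (intro expectation_prod_Pi_pmf integrable_measure_pmf_finite) auto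
  also have "\<dots> = (\<Prod>y\<in>D. h y True * p y + h y False * (1 - p y))"
    using p by (intro prod.cong) auto
  finally show ?thesis .
qed

lemma prob_random_subset_pmf_superset:
  assumes "D \<subseteq> {..<n}" and "\<And>y. y \<in> D \<Longrightarrow> 0 \<le> p y \<and> p y \<le> 1"
  shows "measure_pmf.prob (random_subset_pmf n p) {R. D \<subseteq> R} = (\<Prod>y\<in>D. p y)"
proof -
  have "finite D" using assms(1) finite_subset by blast
  then have "(\<Prod>y\<in>D. of_bool (y \<in> R) :: real) = indicator {R. D \<subseteq> R} R" for R
    by (induction D rule: finite_induct) (auto simp: indicator_def)
  then show ?thesis
    using expectation_random_subset_pmf_prod[OF assms, where h="\<lambda>_. of_bool"]
    by (simp cong: Bochner_Integration.integral_cong)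
qed

lemma prob_le_expectation_of_dominating:
  fixes G :: "'a \<Rightarrow> real"
  assumes "integrable (measure_pmf P) G" and "\<And>s. 0 \<le> G s" and "\<And>s. s \<in> S \<Longrightarrow> 1 \<le> G s"
  shows "measure_pmf.prob P S \<le> measure_pmf.expectation P G"
proof -
  have "measure_pmf.prob P S = measure_pmf.expectation P (indicator S)"
    by simp
  also have "\<dots> \<le> measure_pmf.expectation P G"
    using assms by (intro integral_mono integrable_real_indicator)
      (auto simp: indicator_def less_top[symmetric])
  finally show ?thesis .
qed

lemma cond_prob_le:
  assumes "measure_pmf.prob P {s. E s \<and> F s} \<le> c * measure_pmf.prob P {s. F s}" and "0 \<le> c"
  shows "cond_prob P E F \<le> c"
proof (cases "measure_pmf.prob P {s. F s} = 0")
  case False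
  then have "0 < measure_pmf.prob P {s. F s}"
    by (simp add: zero_less_measure_iff)
  then show ?thesis
    using assms(1) by (simp add: cond_prob_def pos_divide_le_eq)
qed (simp add: cond_prob_def assms(2))

definition pair_count :: "nat set \<Rightarrow> nat \<Rightarrow> nat set \<Rightarrow> real" where
  "pair_count M j R = (\<Sum>a\<in>M. \<Sum>b\<in>M - {a}. of_bool ({j, a, b} \<subseteq> R))"

lemma pair_count_nonneg: "0 \<le> pair_count M j R"
  unfolding pair_count_def by (intro sum_nonneg) auto

lemma one_le_pair_count:
  assumes "finite M" and "j \<in> R" and "2 \<le> card (M \<inter> R)"
  shows "1 \<le> pair_count M j R"
proof -
  obtain T where "T \<subseteq> M \<inter> R" "card T = 2"
    using obtain_subset_with_card_n[OF assms(3)] by blast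
  then obtain a b where ab: "a \<in> M \<inter> R" "b \<in> M \<inter> R" "a \<noteq> b"
    unfolding card_2_iff by blast
  have "1 \<le> (\<Sum>b\<in>M - {a}. of_bool ({j, a, b} \<subseteq> R) :: real)"
    using ab assms by (intro order.trans[OF _ member_le_sum[of b]]) auto
  also have "\<dots> \<le> pair_count M j R"
    unfolding pair_count_def using ab assms
    by (intro member_le_sum[of a] sum_nonneg) auto
  finally show ?thesis .
qed

lemma expectation_pair_count:
  assumes "M \<subseteq> {..<n}" and "j < n" and "j \<notin> M" and p: "\<And>y. y < n \<Longrightarrow> 0 \<le> p y \<and> p y \<le> 1"
  shows "measure_pmf.expectation (random_subset_pmf n p) (pair_count M j) \<le> p j * (\<Sum>a\<in>M. p a)\<^sup>2"
proof -
  have "measure_pmf.expectation (random_subset_pmf n p) (pair_count M j)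
      = (\<Sum>a\<in>M. \<Sum>b\<in>M - {a}. measure_pmf.prob (random_subset_pmf n p) {R. {j, a, b} \<subseteq> R})"
  proof -
    have "pair_count M j = (\<lambda>R. \<Sum>a\<in>M. \<Sum>b\<in>M - {a}. indicator {R. {j, a, b} \<subseteq> R} R)"
      by (simp add: pair_count_def indicator_def fun_eq_iff)
    then show ?thesis
      by (simp add: Bochner_Integration.integral_sum)
  qed
  also have "\<dots> = (\<Sum>a\<in>M. \<Sum>b\<in>M - {a}. p j * p a * p b)"
  proof (intro sum.cong refl)
    fix a b assume "a \<in> M" "b \<in> M - {a}"
    with assms have "{j, a, b} \<subseteq> {..<n}" "j \<noteq> a" "j \<noteq> b" "a \<noteq> b"
      by auto
    then show "measure_pmf.prob (random_subset_pmf n p) {R. {j, a, b} \<subseteq> R} = p j * p a * p b"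
      using p by (subst prob_random_subset_pmf_superset) auto
  qed
  also have "\<dots> \<le> (\<Sum>a\<in>M. \<Sum>b\<in>M. p j * p a * p b)"
    using assms finite_subset by (intro sum_mono sum_mono2) auto
  also have "\<dots> = p j * (\<Sum>a\<in>M. p a)\<^sup>2"
    by (simp add: power2_eq_square sum_distrib_left sum_distrib_right mult_ac)
  finally show ?thesis .
qed

lemma bernoulli_exp_moment_le:
  fixes z p :: real
  assumes "0 \<le> z" "z \<le> 1/2" "0 \<le> p" "p \<le> 1"
  shows "exp z * p + (1 - p) \<le> exp (2 * z * p)"
proof -
  have "exp z \<le> 1 + 2 * z"
    using exp_bound_lemma[of z] assms by simp
  then have "exp z * p + (1 - p) \<le> (1 + 2 * z) * p + (1 - p)"
    using assms by (intro add_right_mono mult_right_mono) auto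
  also have "\<dots> = 1 + 2 * z * p"
    by (simp add: algebra_simps)
  also have "\<dots> \<le> exp (2 * z * p)"
    by (rule exp_ge_add_one_self)
  finally show ?thesis .
qed

definition tilted_weight :: "real \<Rightarrow> (nat \<Rightarrow> real) \<Rightarrow> nat \<Rightarrow> nat set \<Rightarrow> nat set \<Rightarrow> real" where
  "tilted_weight s w j T R = of_bool (j \<in> R) * exp (s * (\<Sum>t\<in>T \<inter> R. w t))"

lemma tilted_weight_nonneg: "0 \<le> tilted_weight s w j T R"
  by (simp add: tilted_weight_def)

lemma exp_le_tilted_weight:
  assumes "j \<in> R" and "0 \<le> s" and "c \<le> (\<Sum>t\<in>T \<inter> R. w t)"
  shows "exp (s * c) \<le> tilted_weight s w j T R"
  using assms by (simp add: tilted_weight_def mult_left_mono)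

lemma expectation_tilted_weight:
  assumes T: "T \<subseteq> {..<n}" and "j < n" and "j \<notin> T"
    and p: "\<And>y. y < n \<Longrightarrow> 0 \<le> p y \<and> p y \<le> 1"
    and sw: "\<And>t. t \<in> T \<Longrightarrow> 0 \<le> s * w t \<and> s * w t \<le> 1/2"
  shows "measure_pmf.expectation (random_subset_pmf n p) (tilted_weight s w j T)
       \<le> p j * exp (2 * s * (\<Sum>t\<in>T. w t * p t))"
proof -
  define h where "h y b = (if y = j then of_bool b else exp (s * w y * of_bool b))" for y b
  have fin: "finite T"
    using T finite_subset by blast
  have "(\<Prod>t\<in>T. h t (t \<in> R)) = exp (s * (\<Sum>t\<in>T \<inter> R. w t))" for R
  proof -
    have "(\<Prod>t\<in>T. h t (t \<in> R)) = exp (\<Sum>t\<in>T. s * (w t * of_bool (t \<in> R)))"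
      using \<open>j \<notin> T\<close> by (auto simp: h_def exp_sum fin mult.assoc intro: prod.cong)
    also have "\<dots> = exp (s * (\<Sum>t\<in>T \<inter> R. w t))"
      by (auto simp: sum_distrib_left sum.inter_restrict[OF fin] intro!: sum.cong)
    finally show ?thesis .
  qed
  then have "tilted_weight s w j T = (\<lambda>R. \<Prod>y\<in>insert j T. h y (y \<in> R))"
    using \<open>j \<notin> T\<close> by (simp add: tilted_weight_def fun_eq_iff fin h_def)
  then have "measure_pmf.expectation (random_subset_pmf n p) (tilted_weight s w j T)
      = (\<Prod>y\<in>insert j T. h y True * p y + h y False * (1 - p y))"
    using T assms(2) p by (simp, intro expectation_random_subset_pmf_prod) (auto simp: h_def)
  also have "\<dots> = p j * (\<Prod>t\<in>T. exp (s * w t) * p t + (1 - p t))"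
    using \<open>j \<notin> T\<close> fin by (auto simp: h_def intro: prod.cong)
  also have "\<dots> \<le> p j * (\<Prod>t\<in>T. exp (2 * (s * w t) * p t))"
    using T p sw assms(2)
    by (intro mult_left_mono prod_mono conjI bernoulli_exp_moment_le add_nonneg_nonneg) auto
  also have "\<dots> = p j * exp (2 * s * (\<Sum>t\<in>T. w t * p t))"
    by (simp add: exp_sum fin sum_distrib_left mult_ac)
  finally show ?thesis .
qed

lemma med_tiny_disjoint: "med k A n i \<inter> tiny k A n i = {}"
  unfolding med_def tiny_def by auto

lemma row_mass_le_one:
  assumes "kcspip_instance k m n A x" and "i < m" and "S \<subseteq> {..<n}"
  shows "(\<Sum>y\<in>S. A i y * x y) \<le> 1"
proof -
  have "(\<Sum>y\<in>S. A i y * x y) \<le> (\<Sum>y<n. A i y * x y)"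
    using assms by (intro sum_mono2) (auto simp: kcspip_instance_def)
  also have "\<dots> \<le> 1"
    using assms by (auto simp: kcspip_instance_def)
  finally show ?thesis .
qed

lemma sum_weights_med_le_ell:
  assumes inst: "kcspip_instance k m n A x" and "i < m" and S: "S \<subseteq> med k A n i"
    and "0 < ell k"
  shows "(\<Sum>a\<in>S. x a) \<le> ell k"
proof -
  have Sn: "S \<subseteq> {..<n}"
    using S by (auto simp: med_def)
  have "(\<Sum>a\<in>S. x a) \<le> (\<Sum>a\<in>S. ell k * (A i a * x a))"
  proof (rule sum_mono)
    fix a assume "a \<in> S"
    then have "1 \<le> ell k * A i a" "0 \<le> x a"
      using S Sn inst \<open>0 < ell k\<close> by (auto simp: med_def kcspip_instance_def field_simps)
    then show "x a \<le> ell k * (A i a * x a)"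
      using mult_right_mono[of 1 "ell k * A i a" "x a"] by (simp add: mult_ac)
  qed
  also have "\<dots> \<le> ell k"
    using row_mass_le_one[OF inst \<open>i < m\<close> Sn] \<open>0 < ell k\<close>
    by (simp add: sum_distrib_left[symmetric] mult_left_le)
  finally show ?thesis .
qed

text \<open>A nonnegative test function for row \<open>i\<close> blocking \<open>j\<close>: a medium block leaves two further
  medium items of the row in \<open>R\<close>, counted by the first summand; otherwise the tiny items of the row
  in \<open>R\<close> carry mass at least \<open>1/3\<close>, and then \<open>exp (- ell / 6) * exp (ell / 2 * 1/3) = 1\<close>.\<close>

definition row_test :: "nat \<Rightarrow> (nat \<Rightarrow> nat \<Rightarrow> real) \<Rightarrow> nat \<Rightarrow> nat \<Rightarrow> nat \<Rightarrow> nat set \<Rightarrow> real" where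
  "row_test k A n i j R = pair_count (med k A n i - {j}) j R
     + exp (- ell k / 6) * tilted_weight (ell k / 2) (A i) j (tiny k A n i - {j}) R"

lemma row_test_nonneg: "0 \<le> row_test k A n i j R"
  unfolding row_test_def by (intro add_nonneg_nonneg mult_nonneg_nonneg pair_count_nonneg tilted_weight_nonneg) auto

lemma tiny_mass_ge_third:
  assumes "6 \<le> ell k" and j: "j \<in> tiny k A n i" and "card (med k A n i \<inter> R) \<le> 1"
    and mass: "1 - A i j < (\<Sum>y\<in>((med k A n i \<union> tiny k A n i) \<inter> R) - {j}. A i y)"
  shows "1/3 \<le> (\<Sum>t\<in>(tiny k A n i - {j}) \<inter> R. A i t)"
proof -
  let ?M = "med k A n i" and ?T = "tiny k A n i"
  have fin: "finite ?M" "finite ?T"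
    unfolding med_def tiny_def by auto
  have "j \<notin> ?M"
    using j med_tiny_disjoint by blast
  then have "((?M \<union> ?T) \<inter> R) - {j} = (?M \<inter> R) \<union> ((?T - {j}) \<inter> R)"
    by auto
  then have "(\<Sum>y\<in>((?M \<union> ?T) \<inter> R) - {j}. A i y) = (\<Sum>y\<in>?M \<inter> R. A i y) + (\<Sum>t\<in>(?T - {j}) \<inter> R. A i t)"
    using fin med_tiny_disjoint[of k A n i] by (simp add: sum.union_disjoint Int_Diff disjoint_iff)
  moreover have "(\<Sum>y\<in>?M \<inter> R. A i y) \<le> 1/2"
  proof -
    have "(\<Sum>y\<in>?M \<inter> R. A i y) \<le> of_nat (card (?M \<inter> R)) * (1/2)"
      by (rule sum_bounded_above) (auto simp: med_def)
    then show ?thesis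
      using assms(3) by simp
  qed
  moreover have "A i j \<le> 1/6"
  proof -
    have "A i j < 1 / ell k"
      using j by (simp add: tiny_def)
    moreover have "1 / ell k \<le> 1/6"
      using assms(1) by (simp add: divide_simps)
    ultimately show ?thesis
      by linarith
  qed
  ultimately show ?thesis
    using mass by linarith
qed

lemma one_le_row_test:
  assumes ell: "6 \<le> ell k" and "j \<in> R"
    and block: "(j \<in> med k A n i \<and> 3 \<le> card (med k A n i \<inter> R)) \<or>
      (j \<in> tiny k A n i \<and> ((\<Sum>y\<in>((med k A n i \<union> tiny k A n i) \<inter> R) - {j}. A i y) > 1 - A i j
        \<or> 2 \<le> card (med k A n i \<inter> R)))"
  shows "1 \<le> row_test k A n i j R"
proof -
  let ?M = "med k A n i" and ?T = "tiny k A n i"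
  have fin: "finite ?M"
    unfolding med_def by auto
  have pairs: "1 \<le> row_test k A n i j R" if "2 \<le> card ((?M - {j}) \<inter> R)"
  proof -
    have "1 \<le> pair_count (?M - {j}) j R"
      using that fin \<open>j \<in> R\<close> by (intro one_le_pair_count) auto
    moreover have "0 \<le> exp (- ell k / 6) * tilted_weight (ell k / 2) (A i) j (?T - {j}) R"
      by (simp add: tilted_weight_nonneg)
    ultimately show ?thesis
      unfolding row_test_def by linarith
  qed
  consider (medium) "j \<in> ?M" "3 \<le> card (?M \<inter> R)"
    | (tiny_pairs) "j \<in> ?T" "2 \<le> card (?M \<inter> R)"
    | (tiny_mass) "j \<in> ?T" "card (?M \<inter> R) \<le> 1" "(\<Sum>y\<in>((?M \<union> ?T) \<inter> R) - {j}. A i y) > 1 - A i j"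
    using block by linarith
  then show ?thesis
  proof cases
    case medium
    have "(?M - {j}) \<inter> R = (?M \<inter> R) - {j}"
      by auto
    then have "card ((?M - {j}) \<inter> R) = card (?M \<inter> R) - 1"
      using medium \<open>j \<in> R\<close> fin by (simp add: card_Diff_singleton)
    then show ?thesis
      using medium by (intro pairs) linarith
  next
    case tiny_pairs
    then have "?M - {j} = ?M"
      using med_tiny_disjoint by blast
    then show ?thesis
      using tiny_pairs by (intro pairs) simp
  next
    case tiny_mass
    have "1/3 \<le> (\<Sum>t\<in>(?T - {j}) \<inter> R. A i t)"
      using tiny_mass ell by (intro tiny_mass_ge_third) auto
    then have "exp (ell k / 2 * (1/3)) \<le> tilted_weight (ell k / 2) (A i) j (?T - {j}) R"
      using ell \<open>j \<in> R\<close> by (intro exp_le_tilted_weight) auto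
    then have "1 \<le> exp (- ell k / 6) * tilted_weight (ell k / 2) (A i) j (?T - {j}) R"
      by (simp add: exp_minus field_simps)
    then show ?thesis
      unfolding row_test_def using pair_count_nonneg[of "?M - {j}" j R] by linarith
  qed
qed

lemma expectation_row_test:
  assumes inst: "kcspip_instance k m n A x" and "i < m" and "j < n"
    and p: "\<And>y. p y = q * x y" and "0 \<le> q" and "q \<le> 1"
    and ell: "6 \<le> ell k" and ell_q: "ell k * q \<le> 1" and exp_ell: "exp (- ell k / 6) \<le> q\<^sup>2"
  shows "measure_pmf.expectation (random_subset_pmf n p) (row_test k A n i j)
       \<le> p j * q\<^sup>2 * (ell k ^ 2 + 3)"
proof -
  let ?M = "med k A n i - {j}" and ?T = "tiny k A n i - {j}" and ?P = "random_subset_pmf n p"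
  have x: "0 \<le> x y \<and> x y \<le> 1" if "y < n" for y
    using inst that by (simp add: kcspip_instance_def)
  have p01: "0 \<le> p y \<and> p y \<le> 1" if "y < n" for y
    using x[OF that] \<open>0 \<le> q\<close> \<open>q \<le> 1\<close> by (simp add: p mult_le_one)
  have sets: "?M \<subseteq> {..<n}" "?T \<subseteq> {..<n}"
    by (auto simp: med_def tiny_def)
  have "(\<Sum>a\<in>?M. p a) = q * (\<Sum>a\<in>?M. x a)"
    by (simp add: p sum_distrib_left)
  also have "\<dots> \<le> q * ell k"
    using sum_weights_med_le_ell[OF inst \<open>i < m\<close>, of ?M] ell \<open>0 \<le> q\<close>
    by (intro mult_left_mono) auto
  finally have mass_med: "(\<Sum>a\<in>?M. p a) \<le> q * ell k" .
  have "2 * (ell k / 2) * (\<Sum>t\<in>?T. A i t * p t) = ell k * q * (\<Sum>t\<in>?T. A i t * x t)"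
    by (simp add: p sum_distrib_left mult_ac)
  also have "\<dots> \<le> 1"
    using row_mass_le_one[OF inst \<open>i < m\<close> sets(2)] ell ell_q \<open>0 \<le> q\<close>
    by (intro order.trans[OF mult_left_le ell_q]) auto
  finally have mass_tiny: "2 * (ell k / 2) * (\<Sum>t\<in>?T. A i t * p t) \<le> 1" .
  have pairs: "measure_pmf.expectation ?P (pair_count ?M j) \<le> p j * (q * ell k)\<^sup>2"
  proof -
    have "measure_pmf.expectation ?P (pair_count ?M j) \<le> p j * (\<Sum>a\<in>?M. p a)\<^sup>2"
      by (rule expectation_pair_count) (use sets \<open>j < n\<close> p01 in auto)
    also have "\<dots> \<le> p j * (q * ell k)\<^sup>2"
      using mass_med p01 \<open>j < n\<close> sets(1)
      by (intro mult_left_mono power_mono sum_nonneg) auto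
    finally show ?thesis .
  qed
  have tilted: "measure_pmf.expectation ?P (tilted_weight (ell k / 2) (A i) j ?T) \<le> p j * exp 1"
  proof -
    have "measure_pmf.expectation ?P (tilted_weight (ell k / 2) (A i) j ?T)
        \<le> p j * exp (2 * (ell k / 2) * (\<Sum>t\<in>?T. A i t * p t))"
      by (rule expectation_tilted_weight)
        (use sets \<open>j < n\<close> p01 ell in \<open>auto simp: tiny_def field_simps\<close>)
    also have "\<dots> \<le> p j * exp 1"
      using mass_tiny p01 \<open>j < n\<close> by (intro mult_left_mono) auto
    finally show ?thesis .
  qed
  have "measure_pmf.expectation ?P (row_test k A n i j)
      = measure_pmf.expectation ?P (pair_count ?M j)
        + exp (- ell k / 6) * measure_pmf.expectation ?P (tilted_weight (ell k / 2) (A i) j ?T)"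
    by (simp add: row_test_def[abs_def])
  also have "\<dots> \<le> p j * (q * ell k)\<^sup>2 + q\<^sup>2 * (p j * exp 1)"
    using pairs tilted exp_ell
    by (intro add_mono mult_mono) (auto intro!: Bochner_Integration.integral_nonneg tilted_weight_nonneg)
  also have "\<dots> \<le> p j * q\<^sup>2 * (ell k ^ 2 + 3)"
  proof -
    have "exp 1 * (p j * q\<^sup>2) \<le> 3 * (p j * q\<^sup>2)"
      using exp_le p01[OF \<open>j < n\<close>] by (intro mult_right_mono) auto
    then show ?thesis
      by (simp add: power_mult_distrib algebra_simps)
  qed
  finally show ?thesis .
qed

lemma prob_blocking_le:
  assumes inst: "kcspip_instance k m n A x" and "j < n"
    and p: "\<And>y. p y = q * x y" and "0 \<le> q" and "q \<le> 1"
    and ell: "6 \<le> ell k" and "ell k * q \<le> 1" and "exp (- ell k / 6) \<le> q\<^sup>2"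
  shows "measure_pmf.prob (random_subset_pmf n p)
           {R. (medium_block k m n A R j \<or> tiny_block k m n A R j) \<and> j \<in> R}
         \<le> real k * (p j * q\<^sup>2 * (ell k ^ 2 + 3))"
proof -
  let ?P = "random_subset_pmf n p"
  define I where "I = {i. i < m \<and> A i j \<noteq> 0}"
  have "finite I"
    by (simp add: I_def)
  have "card I \<le> k"
    using inst \<open>j < n\<close> by (simp add: kcspip_instance_def I_def)
  have dominated: "1 \<le> (\<Sum>i\<in>I. row_test k A n i j R)"
    if blocked: "medium_block k m n A R j \<or> tiny_block k m n A R j" and "j \<in> R" for R
  proof -
    obtain i where "i < m" and block: "(j \<in> med k A n i \<and> 3 \<le> card (med k A n i \<inter> R)) \<or>
      (j \<in> tiny k A n i \<and> ((\<Sum>y\<in>((med k A n i \<union> tiny k A n i) \<inter> R) - {j}. A i y) > 1 - A i j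
        \<or> 2 \<le> card (med k A n i \<inter> R)))"
      using blocked unfolding medium_block_def tiny_block_def by blast
    moreover have "0 < 1 / ell k"
      using ell by simp
    ultimately have "i \<in> I"
      unfolding I_def med_def tiny_def by force
    have "1 \<le> row_test k A n i j R"
      using ell \<open>j \<in> R\<close> block by (intro one_le_row_test)
    also have "\<dots> \<le> (\<Sum>i\<in>I. row_test k A n i j R)"
      using \<open>i \<in> I\<close> \<open>finite I\<close> row_test_nonneg by (intro member_le_sum) auto
    finally show ?thesis .
  qed
  have "measure_pmf.prob ?P {R. (medium_block k m n A R j \<or> tiny_block k m n A R j) \<and> j \<in> R}
      \<le> measure_pmf.expectation ?P (\<lambda>R. \<Sum>i\<in>I. row_test k A n i j R)"
    using dominated by (intro prob_le_expectation_of_dominating sum_nonneg row_test_nonneg) auto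
  also have "\<dots> = (\<Sum>i\<in>I. measure_pmf.expectation ?P (row_test k A n i j))"
    by (simp add: Bochner_Integration.integral_sum)
  also have "\<dots> \<le> (\<Sum>i\<in>I. p j * q\<^sup>2 * (ell k ^ 2 + 3))"
    using assms by (intro sum_mono expectation_row_test) (auto simp: I_def)
  also have "\<dots> = real (card I) * (p j * q\<^sup>2 * (ell k ^ 2 + 3))"
    by simp
  also have "\<dots> \<le> real k * (p j * q\<^sup>2 * (ell k ^ 2 + 3))"
    using \<open>card I \<le> k\<close> inst \<open>j < n\<close> \<open>0 \<le> q\<close>
    by (intro mult_right_mono) (auto simp: p kcspip_instance_def)
  finally show ?thesis .
qed

lemma cond_prob_blocking_le:
  assumes inst: "kcspip_instance k m n A x" and "j < n"
    and L: "1 \<le> ln (real k / alpha k)" and "alpha k \<le> real k" and "1 \<le> real k"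
    and ell_alpha: "ell k * (alpha k / real k) \<le> 1"
  shows "cond_prob (R0_pmf k n x)
           (\<lambda>R. medium_block k m n A R j \<or> tiny_block k m n A R j) (\<lambda>R. j \<in> R)
         \<le> 6403 * (alpha k ^ 2 / real k * (ln (real k / alpha k))\<^sup>2)"
proof -
  define L where "L = ln (real k / alpha k)"
  define q where "q = alpha k / real k"
  define p where "p y = q * x y" for y
  have "0 < alpha k"
    using \<open>1 \<le> real k\<close> by (simp add: alpha_def)
  have q: "0 \<le> q" "q \<le> 1"
    using \<open>0 < alpha k\<close> \<open>alpha k \<le> real k\<close> \<open>1 \<le> real k\<close> by (auto simp: q_def)
  have ell: "ell k = 80 * L"
    by (simp add: ell_def L_def)
  have "q = exp (- L)"
    using \<open>0 < alpha k\<close> \<open>1 \<le> real k\<close> by (simp add: L_def q_def exp_minus)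
  then have "exp (- ell k / 6) \<le> q\<^sup>2"
    using L by (simp add: ell L_def power2_eq_square flip: exp_add)
  have pj: "0 \<le> p j"
    using inst \<open>j < n\<close> q by (simp add: p_def kcspip_instance_def)
  have "R0_pmf k n x = random_subset_pmf n p"
    by (simp add: R0_pmf_eq_random_subset_pmf p_def[abs_def] q_def)
  moreover have "measure_pmf.prob (random_subset_pmf n p)
      {R. (medium_block k m n A R j \<or> tiny_block k m n A R j) \<and> j \<in> R}
      \<le> real k * (p j * q\<^sup>2 * (ell k ^ 2 + 3))"
    using inst \<open>j < n\<close> q L ell_alpha \<open>exp (- ell k / 6) \<le> q\<^sup>2\<close>
    by (intro prob_blocking_le) (auto simp: p_def ell L_def q_def)
  moreover have "real k * (p j * q\<^sup>2 * (ell k ^ 2 + 3)) \<le> 6403 * (alpha k ^ 2 / real k * L\<^sup>2) * p j"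
  proof -
    have "ell k ^ 2 + 3 \<le> 6403 * L\<^sup>2"
      using L by (simp add: ell L_def power_mult_distrib)
    then have "real k * (p j * q\<^sup>2 * (ell k ^ 2 + 3)) \<le> real k * (p j * q\<^sup>2 * (6403 * L\<^sup>2))"
      using pj \<open>1 \<le> real k\<close> by (intro mult_left_mono) auto
    also have "\<dots> = 6403 * (alpha k ^ 2 / real k * L\<^sup>2) * p j"
      using \<open>1 \<le> real k\<close> by (simp add: q_def power2_eq_square field_simps)
    finally show ?thesis .
  qed
  moreover have "measure_pmf.prob (random_subset_pmf n p) {R. j \<in> R} = p j"
    using prob_random_subset_pmf_superset[of "{j}" n p] inst \<open>j < n\<close> q
    by (simp add: p_def kcspip_instance_def mult_le_one)
  ultimately show ?thesis
    unfolding L_def by (intro cond_prob_le) auto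
qed

theorem lemma3:
  shows "(\<exists>C K0. \<forall>k\<ge>K0. \<forall>m n A x j. kcspip_instance k m n A x \<longrightarrow> j < n \<longrightarrow>
            cond_prob (R0_pmf k n x)
              (\<lambda>R. medium_block k m n A R j \<or> tiny_block k m n A R j) (\<lambda>R. j \<in> R)
            \<le> C * (alpha k ^ 2 / real k * (ln (real k / alpha k)) ^ 2))
      \<and> ((\<lambda>k. alpha k ^ 2 / real k * (ln (real k / alpha k)) ^ 2) \<longlonglongrightarrow> 0)"
proof
  have "eventually (\<lambda>k. 1 \<le> ln (real k / alpha k) \<and> alpha k \<le> real k \<and> 1 \<le> real k
      \<and> ell k * (alpha k / real k) \<le> 1) sequentially"
    unfolding ell_def alpha_def by (intro eventually_conj; real_asymp)
  then obtain K0 where "\<And>k. K0 \<le> k \<Longrightarrow> 1 \<le> ln (real k / alpha k) \<and> alpha k \<le> real k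
      \<and> 1 \<le> real k \<and> ell k * (alpha k / real k) \<le> 1"
    by (auto simp: eventually_sequentially)
  then show "\<exists>C K0. \<forall>k\<ge>K0. \<forall>m n A x j. kcspip_instance k m n A x \<longrightarrow> j < n \<longrightarrow>
            cond_prob (R0_pmf k n x)
              (\<lambda>R. medium_block k m n A R j \<or> tiny_block k m n A R j) (\<lambda>R. j \<in> R)
            \<le> C * (alpha k ^ 2 / real k * (ln (real k / alpha k)) ^ 2)"
    using cond_prob_blocking_le by blast
  show "(\<lambda>k. alpha k ^ 2 / real k * (ln (real k / alpha k)) ^ 2) \<longlonglongrightarrow> 0"
    unfolding alpha_def by real_asymp
qed

end
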